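(* Fix $M\ge1$, a finite set $\mathcal F$, a matrix $A\in[0,1]^{|\mathcal F|\times M}$, a vector $\boldsymbol\beta\in[0,1]^{|\mathcal F|}$, $D=\mathrm{diag}(1,\dots,M)$ and a constant $C>0$, and assume the set $\mathcal F_0=\{\mathbf w\in\mathbb{R}^M: A\mathbf w=\boldsymbol\beta,\ \mathbf 0\le\mathbf w\le C\mathbf 1\}$ is nonempty. Let $\theta_{\min}=\min_{\mathbf w\in\mathcal F_0}\mathbf 1^\top AD(\mathbf w+\mathbf 1)$ and $\theta_{\max}=\max_{\mathbf w\in\mathcal F_0}\mathbf 1^\top AD(\mathbf w+\mathbf 1)$. For each $n$, let $\hat A_n$ and $\hat{\boldsymbol\beta}_n$ be random estimators with $\max_{f,y}|\hat A_{n,fy}-A_{fy}|=O_p(n^{-1/2})$ and $\max_f|\hat\beta_{n,f}-\beta_f|=O_p(n^{-1/2})$. Let $\hat m_n=\min_{\mathbf 0\le\mathbf w\le C\mathbf 1}\|\hat A_n\mathbf w-\hat{\boldsymbol\beta}_n\|_\infty$, let $\kappa_n>0$ be deterministic, and define the set-expansion estimators \[\hat\theta_{n,\min}=\min\Big\{\mathbf 1^\top\hat A_nD(\mathbf w+\mathbf 1):\ \|\hat A_n\mathbf w-\hat{\boldsymbol\beta}_n\|_\infty\le\hat m_n+\tfrac{\kappa_n}{\sqrt n},\ \mathbf 0\le\mathbf w\le C\mathbf 1\Big\}\] and $\hat\theta_{n,\max}$ analogously with $\max$ in place of $\min$. If $\kappa_n\to\infty$ and $\kappa_n/\sqrt n\to0$,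 then \[\hat\theta_{n,\min}-\theta_{\min}=O_p\Big(\frac{\kappa_n}{\sqrt n}\Big),\qquad \hat\theta_{n,\max}-\theta_{\max}=O_p\Big(\frac{\kappa_n}{\sqrt n}\Big).\]
   Context: In the application, $A=A_x=[\mathbb{P}(R=1,F=f,Y=y\mid X=x)]_{f,y}$ and $\boldsymbol\beta=\boldsymbol\beta_x=(\mathbb{P}(R=0,F=f\mid X=x))_f$ for a fixed covariate stratum $x$, $n$ is the number of sampled units in that stratum, and $C$ is a known bound such that the true weights $w_x(y)=1/\mathbb{P}(R=1\mid Y=y,X=x)-1$ lie in $[0,C]$ (so $\mathcal F_0\neq\emptyset$); $\theta_{\min},\theta_{\max}$ are the bounds on $\mathbb{E}[Y\mid X=x]$. $\|\cdot\|_\infty$ is the max-absolute-entry norm. *)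

theory Defs
  imports "HOL-Probability.Probability"
begin

text \<open>Index conventions: the rows f range over a finite type 'f (the finite set F);
  the columns y range over {1..M}; vectors w are functions nat => real of which only
  the entries y in {1..M} matter.\<close>

definition matvec :: "('f \<Rightarrow> nat \<Rightarrow> real) \<Rightarrow> nat \<Rightarrow> (nat \<Rightarrow> real) \<Rightarrow> 'f \<Rightarrow> real" where
  "matvec A M w = (\<lambda>f. \<Sum>y\<in>{1..M}. A f y * w y)"

definition norm_inf :: "('f::finite \<Rightarrow> real) \<Rightarrow> real" where
  "norm_inf v = Max (range (\<lambda>f. \<bar>v f\<bar>))"

definition box :: "nat \<Rightarrow> real \<Rightarrow> (nat \<Rightarrow> real) set" where
  "box M C = {w. (\<forall>y\<in>{1..M}. 0 \<le> w y \<and> w y \<le> C) \<and> (\<forall>y. y \<notin> {1..M} \<longrightarrow> w y = 0)}"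

definition objective :: "('f::finite \<Rightarrow> nat \<Rightarrow> real) \<Rightarrow> nat \<Rightarrow> (nat \<Rightarrow> real) \<Rightarrow> real" where
  "objective A M w = (\<Sum>f\<in>UNIV. \<Sum>y\<in>{1..M}. A f y * real y * (w y + 1))"

definition feasible_set :: "('f::finite \<Rightarrow> nat \<Rightarrow> real) \<Rightarrow> ('f \<Rightarrow> real) \<Rightarrow> nat \<Rightarrow> real \<Rightarrow> (nat \<Rightarrow> real) set" where
  "feasible_set A \<beta> M C = {w \<in> box M C. matvec A M w = \<beta>}"

definition theta_min :: "('f::finite \<Rightarrow> nat \<Rightarrow> real) \<Rightarrow> ('f \<Rightarrow> real) \<Rightarrow> nat \<Rightarrow> real \<Rightarrow> real" where
  "theta_min A \<beta> M C = (INF w\<in>feasible_set A \<beta> M C. objective A M w)"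

definition theta_max :: "('f::finite \<Rightarrow> nat \<Rightarrow> real) \<Rightarrow> ('f \<Rightarrow> real) \<Rightarrow> nat \<Rightarrow> real \<Rightarrow> real" where
  "theta_max A \<beta> M C = (SUP w\<in>feasible_set A \<beta> M C. objective A M w)"

definition min_resid :: "('f::finite \<Rightarrow> nat \<Rightarrow> real) \<Rightarrow> ('f \<Rightarrow> real) \<Rightarrow> nat \<Rightarrow> real \<Rightarrow> real" where
  "min_resid A \<beta> M C = (INF w\<in>box M C. norm_inf (\<lambda>f. matvec A M w f - \<beta> f))"

text \<open>expanded feasible set with slack t (= kappa_n / sqrt n)\<close>
definition expanded_set :: "('f::finite \<Rightarrow> nat \<Rightarrow> real) \<Rightarrow> ('f \<Rightarrow> real) \<Rightarrow> nat \<Rightarrow> real \<Rightarrow> real \<Rightarrow> (nat \<Rightarrow> real) set" where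
  "expanded_set A \<beta> M C t = {w \<in> box M C. norm_inf (\<lambda>f. matvec A M w f - \<beta> f) \<le> min_resid A \<beta> M C + t}"

definition theta_hat_min :: "('f::finite \<Rightarrow> nat \<Rightarrow> real) \<Rightarrow> ('f \<Rightarrow> real) \<Rightarrow> nat \<Rightarrow> real \<Rightarrow> real \<Rightarrow> real" where
  "theta_hat_min A \<beta> M C t = (INF w\<in>expanded_set A \<beta> M C t. objective A M w)"

definition theta_hat_max :: "('f::finite \<Rightarrow> nat \<Rightarrow> real) \<Rightarrow> ('f \<Rightarrow> real) \<Rightarrow> nat \<Rightarrow> real \<Rightarrow> real \<Rightarrow> real" where
  "theta_hat_max A \<beta> M C t = (SUP w\<in>expanded_set A \<beta> M C t. objective A M w)"

text \<open>Stochastic boundedness X_n = O_p(r_n), stated with outer probability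
  (for measurable X_n this is the usual definition).\<close>
definition bigOp :: "'a measure \<Rightarrow> (nat \<Rightarrow> 'a \<Rightarrow> real) \<Rightarrow> (nat \<Rightarrow> real) \<Rightarrow> bool" where
  "bigOp P X r \<longleftrightarrow> (\<forall>\<epsilon>>0. \<exists>K. \<exists>N. \<forall>n\<ge>N. \<exists>B\<in>sets P.
      {\<omega>\<in>space P. \<bar>X n \<omega>\<bar> > K * r n} \<subseteq> B \<and> measure P B < \<epsilon>)"

end

theory Submission
  imports Defs
begin

text \<open>
  Both population bounds are optimal values of linear programs over the feasible set
  F_0, and the estimators are optimal values over the expanded set E_n. Let a_n and
  b_n be the entrywise estimation errors of A and \<beta>. On the event
  M C a_n + b_n \<le> t_n = \<kappa>_n / sqrt n, whose probability tends to one because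
  \<kappa>_n \<rightarrow> \<infinity>, the set F_0 lies inside E_n, every point of E_n has true residual at
  most 3 t_n, and replacing A by its estimate moves the objective by O(a_n) = O(t_n).
  A Hoffman-type error bound (every point w of the box is dominated, up to L times its
  residual \<parallel>A w - \<beta>\<parallel>_\<infinity>, by a point of F_0) then bounds both optimal value errors by a
  constant multiple of t_n.

  The error bound is proved by lifting w to (A w - \<beta>, 1, c w). The lifts of the box lie
  in the convex cone generated by the lifted vertices of the box and the upward
  direction of the last coordinate. This cone is a polyhedron, closed upwards in the
  last coordinate, and such a polyhedron has a Lipschitz lower boundary.
\<close>

definition lin_form :: "(nat \<Rightarrow> real) \<Rightarrow> nat \<Rightarrow> (nat \<Rightarrow> real) \<Rightarrow> real" where
  "lin_form c M w = (\<Sum>y\<in>{1..M}. c y * w y)"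

abbreviation residual :: "('f::finite \<Rightarrow> nat \<Rightarrow> real) \<Rightarrow> ('f \<Rightarrow> real) \<Rightarrow> nat \<Rightarrow> (nat \<Rightarrow> real)
    \<Rightarrow> real" where
  "residual A \<beta> M w \<equiv> norm_inf (\<lambda>f. matvec A M w f - \<beta> f)"

lemma matvec_eq_lin_form: "matvec A M w f = lin_form (A f) M w"
  by (simp add: matvec_def lin_form_def)

lemma lin_form_add: "lin_form c M (\<lambda>y. u y + v y) = lin_form c M u + lin_form c M v"
  by (simp add: lin_form_def distrib_left sum.distrib)

lemma lin_form_scale: "lin_form c M (\<lambda>y. k * u y) = k * lin_form c M u"
  by (simp add: lin_form_def sum_distrib_left algebra_simps)

lemma lin_form_affine:
  "lin_form c M (\<lambda>y. (1 - s) * u y + s * v y) = (1 - s) * lin_form c M u + s * lin_form c M v"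
  using lin_form_add[of c M "\<lambda>y. (1 - s) * u y"] lin_form_scale by simp

lemma lin_form_uminus: "lin_form (\<lambda>y. - c y) M w = - lin_form c M w"
  by (simp add: lin_form_def sum_negf)

lemma lin_form_cong: "(\<And>y. y \<in> {1..M} \<Longrightarrow> u y = v y) \<Longrightarrow> lin_form c M u = lin_form c M v"
  by (simp add: lin_form_def)

lemma abs_lin_form_box_le:
  assumes "w \<in> box M C"
  shows "\<bar>lin_form c M w\<bar> \<le> C * (\<Sum>y\<in>{1..M}. \<bar>c y\<bar>)"
proof -
  have "\<bar>lin_form c M w\<bar> \<le> (\<Sum>y\<in>{1..M}. \<bar>c y\<bar> * w y)"
    using assms unfolding lin_form_def box_def by (auto intro: order_trans[OF sum_abs] simp: abs_mult)
  also have "\<dots> \<le> (\<Sum>y\<in>{1..M}. \<bar>c y\<bar> * C)"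
    using assms unfolding box_def by (intro sum_mono mult_left_mono) auto
  finally show ?thesis by (simp add: sum_distrib_left mult.commute)
qed

lemma norm_inf_ge: "\<bar>v f\<bar> \<le> norm_inf (v :: 'f::finite \<Rightarrow> real)"
  unfolding norm_inf_def by (rule Max_ge) auto

lemma norm_inf_le: "(\<And>f. \<bar>v f\<bar> \<le> B) \<Longrightarrow> norm_inf (v :: 'f::finite \<Rightarrow> real) \<le> B"
  unfolding norm_inf_def by (rule Max.boundedI) auto

lemma norm_inf_nonneg: "0 \<le> norm_inf (v :: 'f::finite \<Rightarrow> real)"
  using norm_inf_ge[of v] abs_ge_zero order_trans by blast

lemma norm_inf_zero [simp]: "norm_inf (\<lambda>f::'f::finite. 0) = 0"
  unfolding norm_inf_def by simp

lemma abs_norm_inf_diff_le: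
  fixes u v :: "'f::finite \<Rightarrow> real"
  assumes "\<And>f. \<bar>u f - v f\<bar> \<le> e"
  shows "\<bar>norm_inf u - norm_inf v\<bar> \<le> e"
proof -
  have le: "norm_inf u' \<le> norm_inf v' + e" if "\<And>f. \<bar>u' f - v' f\<bar> \<le> e" for u' v' :: "'f \<Rightarrow> real"
  proof (rule norm_inf_le)
    fix f show "\<bar>u' f\<bar> \<le> norm_inf v' + e"
      using abs_triangle_ineq2[of "u' f" "v' f"] norm_inf_ge[of v' f] that[of f] by linarith
  qed
  have "norm_inf u \<le> norm_inf v + e" "norm_inf v \<le> norm_inf u + e"
    using le assms by (auto simp: abs_minus_commute)
  then show ?thesis by linarith
qed

lemma norm_vec_le_norm_inf: "norm (\<chi> f. v f) \<le> real CARD('f) * norm_inf (v :: 'f::finite \<Rightarrow> real)"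
proof -
  have "norm (\<chi> f. v f) \<le> (\<Sum>f\<in>UNIV. \<bar>v f\<bar>)"
    using norm_le_l1_cart[of "\<chi> f. v f"] by simp
  also have "\<dots> \<le> (\<Sum>f\<in>(UNIV::'f set). norm_inf v)"
    by (intro sum_mono norm_inf_ge)
  finally show ?thesis by simp
qed

definition box_vertex :: "real \<Rightarrow> nat set \<Rightarrow> nat \<Rightarrow> real" where
  "box_vertex C S = (\<lambda>y. if y \<in> S then C else 0)"

lemma box_vertex_in_box: "0 \<le> C \<Longrightarrow> S \<subseteq> {1..M} \<Longrightarrow> box_vertex C S \<in> box M C"
  unfolding box_vertex_def box_def by auto

lemma box_subset_convex_hull_vertices:
  fixes F :: "(nat \<Rightarrow> real) \<Rightarrow> 'v::real_vector"
  assumes C: "C > 0"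
    and affine: "\<And>u v s. F (\<lambda>y. (1 - s) * u y + s * v y) = (1 - s) *\<^sub>R F u + s *\<^sub>R F v"
    and w: "w \<in> box M C"
  shows "F w \<in> convex hull (F ` box_vertex C ` Pow {1..M})"
proof -
  let ?H = "convex hull (F ` box_vertex C ` Pow {1..M})"
  have "F w \<in> ?H" if "w \<in> box M C" "\<forall>y>m. w y = 0 \<or> w y = C" for m w
    using that
  proof (induction m arbitrary: w)
    case 0
    have "w y = box_vertex C {y \<in> {1..M}. w y = C} y" for y
    proof (cases "y \<in> {1..M}")
      case True
      then have "w y = 0 \<or> w y = C" using "0.prems"(2) by simp
      then show ?thesis using C True unfolding box_vertex_def by auto
    next
      case False
      then show ?thesis using "0.prems"(1) unfolding box_def box_vertex_def by simp
    qed
    then have "w = box_vertex C {y \<in> {1..M}. w y = C}" ..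
    then show ?case by (intro hull_inc) blast
  next
    case (Suc m)
    show ?case
    proof (cases "w (Suc m) = 0 \<or> w (Suc m) = C")
      case True
      have "\<forall>y>m. w y = 0 \<or> w y = C"
      proof (intro allI impI)
        fix y assume "m < y"
        then consider "y = Suc m" | "Suc m < y" by linarith
        then show "w y = 0 \<or> w y = C" using True Suc.prems(2) by cases auto
      qed
      then show ?thesis using Suc.IH Suc.prems(1) by blast
    next
      case False
      then have m: "Suc m \<in> {1..M}" "0 \<le> w (Suc m)" "w (Suc m) \<le> C"
        using Suc.prems(1) unfolding box_def by auto
      define s where "s = w (Suc m) / C"
      have s: "0 \<le> s" "s \<le> 1" using m C by (auto simp: s_def)
      have w0: "F (w(Suc m := 0)) \<in> ?H" and wC: "F (w(Suc m := C)) \<in> ?H"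
        using Suc m C unfolding box_def by (auto intro!: Suc.IH simp: less_Suc_eq)
      have "w = (\<lambda>y. (1 - s) * (w(Suc m := 0)) y + s * (w(Suc m := C)) y)"
        using C by (auto simp: fun_eq_iff s_def field_simps)
      then have "F w = (1 - s) *\<^sub>R F (w(Suc m := 0)) + s *\<^sub>R F (w(Suc m := C))"
        by (metis affine)
      also have "\<dots> \<in> ?H"
        using s w0 wC by (intro convexD[OF convex_convex_hull]) auto
      finally show ?thesis .
    qed
  qed
  moreover have "\<forall>y>M. w y = 0" using w unfolding box_def by auto
  ultimately show ?thesis using w by blast
qed

subsection \<open>A Hoffman-type error bound\<close>

lemma halfspace_ray_lipschitz:
  fixes a p0 :: "'v::real_inner" and az :: real
  assumes ray: "\<And>l. 0 \<le> l \<Longrightarrow> a \<bullet> p0 + az * (z0 + l) \<le> b"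
  shows "\<exists>L\<ge>0. \<forall>p z L'. a \<bullet> p + az * z \<le> b \<longrightarrow> L \<le> L' \<longrightarrow>
           a \<bullet> p0 + az * (z + L' * norm (p - p0)) \<le> b"
proof (cases "az < 0")
  case True
  show ?thesis
  proof (intro exI[of _ "norm a / - az"] conjI allI impI)
    show "0 \<le> norm a / - az" using True by (intro divide_nonneg_pos) auto
    fix p z L' assume p: "a \<bullet> p + az * z \<le> b" and L': "norm a / - az \<le> L'"
    have "a \<bullet> (p0 - p) \<le> norm a * norm (p - p0)"
      using norm_cauchy_schwarz[of a "p0 - p"] by (simp add: norm_minus_commute)
    moreover have "norm a \<le> - az * L'" using L' True by (simp add: field_simps)
    then have "norm a * norm (p - p0) \<le> (- az * L') * norm (p - p0)"
      by (rule mult_right_mono) simp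
    ultimately show "a \<bullet> p0 + az * (z + L' * norm (p - p0)) \<le> b"
      using p by (simp add: inner_diff_right algebra_simps)
  qed
next
  case False
  have "az = 0"
  proof (rule ccontr)
    assume "az \<noteq> 0"
    with False have az: "az > 0" by simp
    define l where "l = (\<bar>b - a \<bullet> p0 - az * z0\<bar> + 1) / az"
    have "a \<bullet> p0 + az * (z0 + l) \<le> b" using az by (intro ray) (simp add: l_def)
    moreover have "az * l = \<bar>b - a \<bullet> p0 - az * z0\<bar> + 1" using az by (simp add: l_def)
    ultimately show False by (simp add: algebra_simps)
  qed
  then show ?thesis using ray[of 0] by auto
qed

lemma polyhedron_upward_closed_lipschitz:
  fixes K :: "('v::euclidean_space \<times> real) set"
  assumes "polyhedron K" and p0: "(p0, z0) \<in> K"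
    and up: "\<And>p z l. (p, z) \<in> K \<Longrightarrow> 0 \<le> l \<Longrightarrow> (p, z + l) \<in> K"
  shows "\<exists>L\<ge>0. \<forall>p z. (p, z) \<in> K \<longrightarrow> (p0, z + L * norm (p - p0)) \<in> K"
proof -
  obtain F where F: "finite F" "K = \<Inter>F" "\<And>h. h \<in> F \<Longrightarrow> \<exists>a b. a \<noteq> 0 \<and> h = {x. a \<bullet> x \<le> b}"
    using assms(1) unfolding polyhedron_def by blast
  have "\<exists>L\<ge>0. \<forall>p z L'. (p, z) \<in> h \<longrightarrow> L \<le> L' \<longrightarrow> (p0, z + L' * norm (p - p0)) \<in> h"
    if h: "h \<in> F" for h
  proof -
    obtain a az b where h_eq: "h = {x. (a, az) \<bullet> x \<le> b}" using F(3)[OF h] by fastforce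
    have "(p0, z0 + l) \<in> h" if "0 \<le> l" for l using up[OF p0 that] F(2) h by blast
    then have "a \<bullet> p0 + az * (z0 + l) \<le> b" if "0 \<le> l" for l using that h_eq by simp
    from halfspace_ray_lipschitz[OF this] show ?thesis using h_eq by simp
  qed
  then obtain Lh where Lh: "\<And>h. h \<in> F \<Longrightarrow> 0 \<le> Lh h \<and>
      (\<forall>p z L'. (p, z) \<in> h \<longrightarrow> Lh h \<le> L' \<longrightarrow> (p0, z + L' * norm (p - p0)) \<in> h)"
    by metis
  define L where "L = (\<Sum>h\<in>F. Lh h)"
  have "Lh h \<le> L" if "h \<in> F" for h
    unfolding L_def using F(1) Lh that by (intro member_le_sum) auto
  moreover have "0 \<le> L" unfolding L_def using Lh by (simp add: sum_nonneg)
  ultimately show ?thesis using Lh F(2) by blast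
qed

definition lifted_point :: "('f::finite \<Rightarrow> nat \<Rightarrow> real) \<Rightarrow> ('f \<Rightarrow> real) \<Rightarrow> (nat \<Rightarrow> real) \<Rightarrow> nat
    \<Rightarrow> (nat \<Rightarrow> real) \<Rightarrow> ((real^'f) \<times> real) \<times> real" where
  "lifted_point A \<beta> c M w = ((\<chi> f. matvec A M w f - \<beta> f, 1), lin_form c M w)"

text \<open>The homogenisation of the set of points ((A w - \<beta>, 1), z) with w in the box and z \<ge> c w.\<close>

definition lifted_cone :: "('f::finite \<Rightarrow> nat \<Rightarrow> real) \<Rightarrow> ('f \<Rightarrow> real) \<Rightarrow> (nat \<Rightarrow> real) \<Rightarrow> nat \<Rightarrow> real
    \<Rightarrow> (((real^'f) \<times> real) \<times> real) set" where
  "lifted_cone A \<beta> c M C = {((r, t), z). 0 \<le> t \<and> (\<exists>u. (\<forall>y\<in>{1..M}. 0 \<le> u y \<and> u y \<le> t * C)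
      \<and> r = (\<chi> f. matvec A M u f - t * \<beta> f) \<and> lin_form c M u \<le> z)}"

definition vertex_cone :: "('f::finite \<Rightarrow> nat \<Rightarrow> real) \<Rightarrow> ('f \<Rightarrow> real) \<Rightarrow> (nat \<Rightarrow> real) \<Rightarrow> nat \<Rightarrow> real
    \<Rightarrow> (((real^'f) \<times> real) \<times> real) set" where
  "vertex_cone A \<beta> c M C =
     convex_cone hull (lifted_point A \<beta> c M ` box_vertex C ` Pow {1..M} \<union> {((0, 0), 1)})"

lemma convex_cone_lifted_cone: "convex_cone (lifted_cone A \<beta> c M C)"
  unfolding convex_cone_iff
proof (intro conjI ballI allI impI)
  show "0 \<in> lifted_cone A \<beta> c M C"
    by (auto simp: lifted_cone_def zero_prod_def vec_eq_iff matvec_def lin_form_def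
        intro!: exI[of _ "\<lambda>_. 0"])
next
  fix p q assume p: "p \<in> lifted_cone A \<beta> c M C" and q: "q \<in> lifted_cone A \<beta> c M C"
  obtain r1 t1 z1 u1 where "p = ((r1, t1), z1)" "0 \<le> t1" "\<forall>y\<in>{1..M}. 0 \<le> u1 y \<and> u1 y \<le> t1 * C"
      "r1 = (\<chi> f. matvec A M u1 f - t1 * \<beta> f)" "lin_form c M u1 \<le> z1"
    using p unfolding lifted_cone_def by auto
  moreover obtain r2 t2 z2 u2 where "q = ((r2, t2), z2)" "0 \<le> t2" "\<forall>y\<in>{1..M}. 0 \<le> u2 y \<and> u2 y \<le> t2 * C"
      "r2 = (\<chi> f. matvec A M u2 f - t2 * \<beta> f)" "lin_form c M u2 \<le> z2"
    using q unfolding lifted_cone_def by auto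
  ultimately show "p + q \<in> lifted_cone A \<beta> c M C"
    unfolding lifted_cone_def
    by (auto intro!: exI[of _ "\<lambda>y. u1 y + u2 y"] add_mono
        simp: matvec_eq_lin_form lin_form_add vec_eq_iff algebra_simps)
next
  fix p and k :: real assume p: "p \<in> lifted_cone A \<beta> c M C" and k: "0 \<le> k"
  obtain r t z u where "p = ((r, t), z)" "0 \<le> t" "\<forall>y\<in>{1..M}. 0 \<le> u y \<and> u y \<le> t * C"
      "r = (\<chi> f. matvec A M u f - t * \<beta> f)" "lin_form c M u \<le> z"
    using p unfolding lifted_cone_def by auto
  moreover have "0 \<le> k * u y \<and> k * u y \<le> (k * t) * C" if "y \<in> {1..M}" for y
    using calculation(3) that k mult_left_mono[of "u y" "t * C" k] by (simp add: mult.assoc)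
  moreover have "k * lin_form c M u \<le> k * z" using calculation(5) k by (rule mult_left_mono)
  ultimately show "k *\<^sub>R p \<in> lifted_cone A \<beta> c M C"
    unfolding lifted_cone_def using k
    by (auto intro!: exI[of _ "\<lambda>y. k * u y"]
        simp: matvec_eq_lin_form lin_form_scale vec_eq_iff algebra_simps)
qed

lemma lifted_cone_slice_feasible:
  assumes "((0, 1), z) \<in> lifted_cone A \<beta> c M C"
  shows "\<exists>v\<in>feasible_set A \<beta> M C. lin_form c M v \<le> z"
proof -
  obtain u where u: "\<forall>y\<in>{1..M}. 0 \<le> u y \<and> u y \<le> C" "0 = (\<chi> f. matvec A M u f - \<beta> f)"
      "lin_form c M u \<le> z"
    using assms unfolding lifted_cone_def by auto
  define v where "v y = (if y \<in> {1..M} then u y else 0)" for y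
  have "lin_form a M v = lin_form a M u" for a by (rule lin_form_cong) (simp add: v_def)
  then have "v \<in> feasible_set A \<beta> M C" "lin_form c M v \<le> z"
    using u unfolding feasible_set_def box_def by (auto simp: v_def vec_eq_iff matvec_eq_lin_form)
  then show ?thesis by blast
qed

lemma vertex_cone_subset_lifted_cone:
  assumes "0 \<le> C"
  shows "vertex_cone A \<beta> c M C \<subseteq> lifted_cone A \<beta> c M C"
  unfolding vertex_cone_def
proof (intro hull_minimal convex_cone_lifted_cone Un_least)
  have "lifted_point A \<beta> c M w \<in> lifted_cone A \<beta> c M C" if "w \<in> box M C" for w
    using that unfolding lifted_point_def lifted_cone_def box_def by (auto intro!: exI[of _ w])
  then show "lifted_point A \<beta> c M ` box_vertex C ` Pow {1..M} \<subseteq> lifted_cone A \<beta> c M C"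
    using box_vertex_in_box[OF assms] by blast
  show "{((0, 0), 1)} \<subseteq> lifted_cone A \<beta> c M C"
    unfolding lifted_cone_def by (auto intro!: exI[of _ "\<lambda>_. 0"] simp: vec_eq_iff matvec_def lin_form_def)
qed

lemma lifted_point_in_vertex_cone:
  assumes "C > 0" and "w \<in> box M C"
  shows "lifted_point A \<beta> c M w \<in> vertex_cone A \<beta> c M C"
proof -
  have "lifted_point A \<beta> c M (\<lambda>y. (1 - s) * u y + s * v y)
      = (1 - s) *\<^sub>R lifted_point A \<beta> c M u + s *\<^sub>R lifted_point A \<beta> c M v" for u v s
    by (simp only: lifted_point_def matvec_eq_lin_form lin_form_affine)
      (simp add: vec_eq_iff algebra_simps)
  then have "lifted_point A \<beta> c M w \<in> convex hull (lifted_point A \<beta> c M ` box_vertex C ` Pow {1..M})"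
    using assms by (intro box_subset_convex_hull_vertices)
  also have "\<dots> \<subseteq> vertex_cone A \<beta> c M C"
    unfolding vertex_cone_def
    by (meson convex_hull_subset_convex_cone_hull hull_mono order_trans sup_ge1)
  finally show ?thesis .
qed

lemma vertex_cone_upward:
  assumes "(p, z) \<in> vertex_cone A \<beta> c M C" and "0 \<le> l"
  shows "(p, z + l) \<in> vertex_cone A \<beta> c M C"
proof -
  have "((0, 0), 1) \<in> vertex_cone A \<beta> c M C" unfolding vertex_cone_def by (simp add: hull_inc)
  then have "(p, z) + l *\<^sub>R ((0, 0), 1) \<in> vertex_cone A \<beta> c M C"
    using assms unfolding vertex_cone_def by (intro convex_cone_hull_add convex_cone_hull_mul)
  then show ?thesis by (simp flip: zero_prod_def)
qed

lemma polyhedron_vertex_cone: "polyhedron (vertex_cone A \<beta> c M C)"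
  unfolding vertex_cone_def by (intro polyhedron_convex_cone_hull) simp

theorem hoffman_bound:
  fixes A :: "'f::finite \<Rightarrow> nat \<Rightarrow> real"
  assumes C: "C > 0" and feasible: "feasible_set A \<beta> M C \<noteq> {}"
  shows "\<exists>L\<ge>0. \<forall>w\<in>box M C. \<exists>v\<in>feasible_set A \<beta> M C.
           lin_form c M v \<le> lin_form c M w + L * residual A \<beta> M w"
proof -
  let ?K = "vertex_cone A \<beta> c M C"
  obtain w0 where w0: "w0 \<in> feasible_set A \<beta> M C" using feasible by blast
  then have "lifted_point A \<beta> c M w0 = ((0, 1), lin_form c M w0)"
    unfolding feasible_set_def lifted_point_def by (simp add: vec_eq_iff)
  then have "((0, 1), lin_form c M w0) \<in> ?K"
    using lifted_point_in_vertex_cone[OF C] w0 unfolding feasible_set_def by (metis mem_Collect_eq)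
  then obtain L where L: "0 \<le> L" "\<And>p z. (p, z) \<in> ?K \<Longrightarrow> ((0, 1), z + L * norm (p - (0, 1))) \<in> ?K"
    using polyhedron_upward_closed_lipschitz[OF polyhedron_vertex_cone _ vertex_cone_upward] by blast
  show ?thesis
  proof (intro exI[of _ "real CARD('f) * L"] conjI ballI)
    show "0 \<le> real CARD('f) * L" using L(1) by simp
    fix w assume w: "w \<in> box M C"
    let ?R = "\<chi> f. matvec A M w f - \<beta> f"
    have "((?R, 1), lin_form c M w) \<in> ?K"
      using lifted_point_in_vertex_cone[OF C w] unfolding lifted_point_def .
    then have "((0, 1), lin_form c M w + L * norm ?R) \<in> ?K" using L(2) by fastforce
    then have "((0, 1), lin_form c M w + L * norm ?R) \<in> lifted_cone A \<beta> c M C"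
      using vertex_cone_subset_lifted_cone[of C A \<beta> c M] C by auto
    then obtain v where v: "v \<in> feasible_set A \<beta> M C" "lin_form c M v \<le> lin_form c M w + L * norm ?R"
      using lifted_cone_slice_feasible by blast
    have "L * norm ?R \<le> real CARD('f) * L * residual A \<beta> M w"
      using mult_left_mono[OF norm_vec_le_norm_inf[of "\<lambda>f. matvec A M w f - \<beta> f"] L(1)]
      by (simp add: algebra_simps)
    with v show "\<exists>v\<in>feasible_set A \<beta> M C.
        lin_form c M v \<le> lin_form c M w + real CARD('f) * L * residual A \<beta> M w"
      by force
  qed
qed

lemma objective_eq_lin_form:
  "objective A M w = objective A M (\<lambda>_. 0) + lin_form (\<lambda>y. \<Sum>f\<in>UNIV. A f y * real y) M w"
proof -
  have "objective A M w = (\<Sum>f\<in>UNIV. \<Sum>y\<in>{1..M}. A f y * real y + A f y * real y * w y)"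
    unfolding objective_def by (simp add: algebra_simps)
  also have "\<dots> = objective A M (\<lambda>_. 0) + (\<Sum>y\<in>{1..M}. \<Sum>f\<in>UNIV. A f y * real y * w y)"
    unfolding objective_def by (simp add: sum.distrib sum.swap[of _ UNIV])
  finally show ?thesis by (simp add: lin_form_def sum_distrib_right)
qed

lemma objective_hoffman_bound:
  fixes A :: "'f::finite \<Rightarrow> nat \<Rightarrow> real"
  assumes "C > 0" and "feasible_set A \<beta> M C \<noteq> {}"
  obtains L where "0 \<le> L"
    and "\<And>w. w \<in> box M C \<Longrightarrow>
           \<exists>v\<in>feasible_set A \<beta> M C. objective A M v \<le> objective A M w + L * residual A \<beta> M w"
    and "\<And>w. w \<in> box M C \<Longrightarrow>
           \<exists>v\<in>feasible_set A \<beta> M C. objective A M w \<le> objective A M v + L * residual A \<beta> M w"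
proof -
  let ?c = "\<lambda>y. \<Sum>f\<in>UNIV. A f y * real y"
  obtain L1 where L1: "0 \<le> L1" "\<forall>w\<in>box M C. \<exists>v\<in>feasible_set A \<beta> M C.
      lin_form ?c M v \<le> lin_form ?c M w + L1 * residual A \<beta> M w"
    using hoffman_bound[OF assms] by blast
  obtain L2 where L2: "0 \<le> L2" "\<forall>w\<in>box M C. \<exists>v\<in>feasible_set A \<beta> M C.
      lin_form (\<lambda>y. - ?c y) M v \<le> lin_form (\<lambda>y. - ?c y) M w + L2 * residual A \<beta> M w"
    using hoffman_bound[OF assms] by blast
  have L: "L1 * residual A \<beta> M w \<le> max L1 L2 * residual A \<beta> M w"
    "L2 * residual A \<beta> M w \<le> max L1 L2 * residual A \<beta> M w" for w
    by (simp_all add: mult_right_mono norm_inf_nonneg)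
  show thesis
  proof (rule that[of "max L1 L2"])
    show "0 \<le> max L1 L2" using L1(1) by simp
  next
    fix w assume "w \<in> box M C"
    then obtain v where v: "v \<in> feasible_set A \<beta> M C"
      "lin_form ?c M v \<le> lin_form ?c M w + L1 * residual A \<beta> M w"
      using L1(2) by blast
    then have "objective A M v \<le> objective A M w + max L1 L2 * residual A \<beta> M w"
      using L(1)[of w] objective_eq_lin_form[of A M v] objective_eq_lin_form[of A M w] by linarith
    with v(1) show "\<exists>v\<in>feasible_set A \<beta> M C.
        objective A M v \<le> objective A M w + max L1 L2 * residual A \<beta> M w" by blast
  next
    fix w assume "w \<in> box M C"
    then obtain v where v: "v \<in> feasible_set A \<beta> M C"
      "- lin_form ?c M v \<le> - lin_form ?c M w + L2 * residual A \<beta> M w"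
      using L2(2) unfolding lin_form_uminus by blast
    then have "objective A M w \<le> objective A M v + max L1 L2 * residual A \<beta> M w"
      using L(2)[of w] objective_eq_lin_form[of A M v] objective_eq_lin_form[of A M w] by linarith
    with v(1) show "\<exists>v\<in>feasible_set A \<beta> M C.
        objective A M w \<le> objective A M v + max L1 L2 * residual A \<beta> M w" by blast
  qed
qed

lemma bdd_objective_box:
  assumes "S \<subseteq> box M C"
  shows "bdd_below (objective A M ` S)" and "bdd_above (objective A M ` S)"
proof -
  let ?c = "\<lambda>y. \<Sum>f\<in>UNIV. A f y * real y"
  define B where "B = \<bar>objective A M (\<lambda>_. 0)\<bar> + C * (\<Sum>y\<in>{1..M}. \<bar>?c y\<bar>)"
  have "\<bar>objective A M w\<bar> \<le> B" if "w \<in> S" for w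
    using abs_lin_form_box_le[of w M C ?c] assms that objective_eq_lin_form[of A M w]
      abs_triangle_ineq[of "objective A M (\<lambda>_. 0)" "lin_form ?c M w"]
    unfolding B_def by auto
  then show "bdd_below (objective A M ` S)" "bdd_above (objective A M ` S)"
    by (force simp: abs_le_iff intro!: bdd_belowI2[where m = "- B"] bdd_aboveI2[where M = B])+
qed

lemma residual_perturbation:
  fixes A Ah :: "'f::finite \<Rightarrow> nat \<Rightarrow> real"
  assumes w: "w \<in> box M C"
    and A_close: "\<And>f y. y \<in> {1..M} \<Longrightarrow> \<bar>Ah f y - A f y\<bar> \<le> a"
    and \<beta>_close: "\<And>f. \<bar>bh f - \<beta> f\<bar> \<le> b"
  shows "\<bar>residual Ah bh M w - residual A \<beta> M w\<bar> \<le> real M * C * a + b"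
proof (rule abs_norm_inf_diff_le)
  fix f
  have "\<bar>(Ah f y - A f y) * w y\<bar> \<le> a * C" if y: "y \<in> {1..M}" for y
  proof -
    have "0 \<le> w y" "w y \<le> C" using w y unfolding box_def by auto
    moreover have "0 \<le> a" using A_close[OF y] by (meson abs_ge_zero order_trans)
    ultimately show ?thesis using A_close[OF y] by (simp add: abs_mult mult_mono)
  qed
  then have "(\<Sum>y\<in>{1..M}. \<bar>(Ah f y - A f y) * w y\<bar>) \<le> (\<Sum>y\<in>{1..M}. a * C)"
    by (rule sum_mono)
  moreover have "\<bar>matvec Ah M w f - matvec A M w f\<bar> \<le> (\<Sum>y\<in>{1..M}. \<bar>(Ah f y - A f y) * w y\<bar>)"
    unfolding matvec_def by (simp add: sum_subtractf[symmetric] left_diff_distrib sum_abs)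
  ultimately have "\<bar>matvec Ah M w f - matvec A M w f\<bar> \<le> real M * C * a"
    by (simp add: algebra_simps)
  then show "\<bar>(matvec Ah M w f - bh f) - (matvec A M w f - \<beta> f)\<bar> \<le> real M * C * a + b"
    using \<beta>_close[of f] by linarith
qed

lemma objective_perturbation:
  fixes A Ah :: "'f::finite \<Rightarrow> nat \<Rightarrow> real"
  assumes w: "w \<in> box M C"
    and A_close: "\<And>f y. y \<in> {1..M} \<Longrightarrow> \<bar>Ah f y - A f y\<bar> \<le> a"
  shows "\<bar>objective Ah M w - objective A M w\<bar> \<le> real CARD('f) * real M * real M * (C + 1) * a"
proof -
  have term_le: "\<bar>(Ah f y - A f y) * real y * (w y + 1)\<bar> \<le> a * real M * (C + 1)"
    if y: "y \<in> {1..M}" for f y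
  proof -
    have "0 \<le> w y" "w y \<le> C" using w y unfolding box_def by auto
    moreover have "0 \<le> a" using A_close[OF y] by (meson abs_ge_zero order_trans)
    ultimately show ?thesis
      using A_close[OF y] y by (simp add: abs_mult mult_mono)
  qed
  have "\<bar>objective Ah M w - objective A M w\<bar>
      = \<bar>\<Sum>f\<in>UNIV. \<Sum>y\<in>{1..M}. (Ah f y - A f y) * real y * (w y + 1)\<bar>"
    unfolding objective_def by (simp add: sum_subtractf[symmetric] algebra_simps)
  also have "\<dots> \<le> (\<Sum>f\<in>UNIV. \<Sum>y\<in>{1..M}. \<bar>(Ah f y - A f y) * real y * (w y + 1)\<bar>)"
    by (intro order_trans[OF sum_abs] sum_mono sum_abs)
  also have "\<dots> \<le> (\<Sum>f\<in>(UNIV::'f set). \<Sum>y\<in>{1..M}. a * real M * (C + 1))"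
    using term_le by (intro sum_mono) auto
  finally show ?thesis by (simp add: algebra_simps)
qed

lemma zero_in_box: "0 \<le> C \<Longrightarrow> (\<lambda>_. 0) \<in> box M C"
  unfolding box_def by auto

lemma min_resid_nonneg: "0 \<le> C \<Longrightarrow> 0 \<le> min_resid A \<beta> M C"
  unfolding min_resid_def by (rule cINF_greatest) (auto simp: norm_inf_nonneg dest: zero_in_box)

lemma min_resid_le: "w \<in> box M C \<Longrightarrow> min_resid A \<beta> M C \<le> residual A \<beta> M w"
  unfolding min_resid_def by (rule cINF_lower) (auto intro!: bdd_belowI2[where m = 0] norm_inf_nonneg)

lemma expanded_set_subset_box: "expanded_set A \<beta> M C t \<subseteq> box M C"
  unfolding expanded_set_def by auto

subsection \<open>Perturbation of optimal values\<close>

lemma INF_perturbation_le: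
  fixes g h :: "'b \<Rightarrow> real"
  assumes S0: "S0 \<noteq> {}" "S0 \<subseteq> S" and bdd: "bdd_below (h ` S)"
    and close: "\<And>w. w \<in> S \<Longrightarrow> \<bar>g w - h w\<bar> \<le> e"
    and dominated: "\<And>w. w \<in> S \<Longrightarrow> \<exists>v\<in>S0. h v \<le> h w + d" and "0 \<le> d"
  shows "\<bar>(INF w\<in>S. g w) - (INF v\<in>S0. h v)\<bar> \<le> e + d"
proof -
  obtain m where m: "\<And>w. w \<in> S \<Longrightarrow> m \<le> h w" using bdd by (auto simp: bdd_below_def)
  have bdd_g: "bdd_below (g ` S)"
    using m close by (force simp: abs_le_iff intro!: bdd_belowI2[where m = "m - e"])
  have bdd_h0: "bdd_below (h ` S0)" using S0(2) bdd by (meson bdd_below_mono image_mono)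
  have "(INF w\<in>S. g w) - e \<le> (INF v\<in>S0. h v)"
  proof (rule cINF_greatest[OF S0(1)])
    fix v assume "v \<in> S0"
    then show "(INF w\<in>S. g w) - e \<le> h v"
      using cINF_lower[OF bdd_g, of v] close[of v] S0(2) by (auto simp: abs_le_iff)
  qed
  moreover have "(INF v\<in>S0. h v) - d - e \<le> (INF w\<in>S. g w)"
  proof (rule cINF_greatest)
    show "S \<noteq> {}" using S0 by blast
    fix w assume w: "w \<in> S"
    then obtain v where "v \<in> S0" "h v \<le> h w + d" using dominated by blast
    then have "(INF v\<in>S0. h v) \<le> h w + d" using cINF_lower[OF bdd_h0] by (meson order_trans)
    then show "(INF v\<in>S0. h v) - d - e \<le> g w" using close[OF w] by (auto simp: abs_le_iff)
  qed
  ultimately show ?thesis using \<open>0 \<le> d\<close> by (auto simp: abs_le_iff)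
qed

lemma SUP_perturbation_le:
  fixes g h :: "'b \<Rightarrow> real"
  assumes S0: "S0 \<noteq> {}" "S0 \<subseteq> S" and bdd: "bdd_above (h ` S)"
    and close: "\<And>w. w \<in> S \<Longrightarrow> \<bar>g w - h w\<bar> \<le> e"
    and dominated: "\<And>w. w \<in> S \<Longrightarrow> \<exists>v\<in>S0. h w \<le> h v + d" and "0 \<le> d"
  shows "\<bar>(SUP w\<in>S. g w) - (SUP v\<in>S0. h v)\<bar> \<le> e + d"
proof -
  obtain m where m: "\<And>w. w \<in> S \<Longrightarrow> h w \<le> m" using bdd by (auto simp: bdd_above_def)
  have bdd_g: "bdd_above (g ` S)"
    using m close by (force simp: abs_le_iff intro!: bdd_aboveI2[where M = "m + e"])
  have bdd_h0: "bdd_above (h ` S0)" using S0(2) bdd by (meson bdd_above_mono image_mono)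
  have "\<bar>(INF w\<in>S. - g w) - (INF v\<in>S0. - h v)\<bar> \<le> e + d"
  proof (rule INF_perturbation_le[OF S0])
    show "bdd_below ((\<lambda>w. - h w) ` S)" using bdd by (simp add: bdd_below_uminus_image)
    show "\<bar>- g w - - h w\<bar> \<le> e" if "w \<in> S" for w using close[OF that] by (auto simp: abs_le_iff)
    show "\<exists>v\<in>S0. - h v \<le> - h w + d" if "w \<in> S" for w
      using dominated[OF that] by (auto simp: algebra_simps)
  qed fact
  moreover have "(INF w\<in>S. - g w) = - (SUP w\<in>S. g w)" "(INF v\<in>S0. - h v) = - (SUP v\<in>S0. h v)"
    using uminus_cSUP[OF bdd_g] uminus_cSUP[OF bdd_h0 S0(1)] S0 by (metis subset_empty)+
  ultimately show ?thesis by (simp add: abs_minus_commute)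
qed

text \<open>Throughout, t plays the role of \<kappa>_n / sqrt n, and a, b bound the estimation errors.\<close>

context
  fixes A Ah :: "'f::finite \<Rightarrow> nat \<Rightarrow> real" and \<beta> bh :: "'f \<Rightarrow> real"
    and M :: nat and C a b t :: real
  assumes C: "0 < C"
    and A_close: "\<And>f y. y \<in> {1..M} \<Longrightarrow> \<bar>Ah f y - A f y\<bar> \<le> a"
    and \<beta>_close: "\<And>f. \<bar>bh f - \<beta> f\<bar> \<le> b"
    and slack: "real M * C * a + b \<le> t"
begin

lemma slack_nonneg: "0 \<le> b" "0 \<le> t"
proof -
  show b: "0 \<le> b" using \<beta>_close[of undefined] by (meson abs_ge_zero order_trans)
  have "0 \<le> real M * C * a"
  proof (cases "M = 0")
    case False
    then have "1 \<in> {1..M}" by simp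
    then have "0 \<le> a" using A_close by (meson abs_ge_zero order_trans)
    then show ?thesis using C by simp
  qed simp
  then show "0 \<le> t" using b slack by linarith
qed

lemma objective_perturbation_le_slack:
  assumes "w \<in> box M C"
  shows "\<bar>objective Ah M w - objective A M w\<bar> \<le> real CARD('f) * real M * (C + 1) / C * t"
proof -
  have "real CARD('f) * real M * real M * (C + 1) * a
      = real CARD('f) * real M * (C + 1) / C * (real M * C * a)"
    using C by (simp add: field_simps)
  also have "\<dots> \<le> real CARD('f) * real M * (C + 1) / C * t"
    using C slack slack_nonneg(1) by (intro mult_left_mono) auto
  finally show ?thesis
    using objective_perturbation[where Ah = Ah and A = A, OF assms A_close] by linarith
qed

lemma residual_feasible_le_slack:
  assumes "v \<in> feasible_set A \<beta> M C"
  shows "residual Ah bh M v \<le> real M * C * a + b"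
proof -
  have "v \<in> box M C" "residual A \<beta> M v = 0" using assms unfolding feasible_set_def by auto
  then show ?thesis
    using residual_perturbation[where Ah = Ah and A = A and bh = bh and \<beta> = \<beta>, OF _ A_close \<beta>_close]
    by fastforce
qed

lemma feasible_subset_expanded_set: "feasible_set A \<beta> M C \<subseteq> expanded_set Ah bh M C t"
proof
  fix v assume v: "v \<in> feasible_set A \<beta> M C"
  then have "residual Ah bh M v \<le> min_resid Ah bh M C + t"
    using residual_feasible_le_slack slack min_resid_nonneg[of C Ah bh M] C by fastforce
  then show "v \<in> expanded_set Ah bh M C t"
    using v unfolding expanded_set_def feasible_set_def by simp
qed

lemma residual_expanded_set_le:
  assumes feasible: "feasible_set A \<beta> M C \<noteq> {}" and w: "w \<in> expanded_set Ah bh M C t"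
  shows "residual A \<beta> M w \<le> 3 * t"
proof -
  obtain v where v: "v \<in> feasible_set A \<beta> M C" using feasible by blast
  have "w \<in> box M C" using w expanded_set_subset_box by blast
  then have "residual A \<beta> M w \<le> residual Ah bh M w + (real M * C * a + b)"
    using residual_perturbation[where Ah = Ah and A = A and bh = bh and \<beta> = \<beta>, OF _ A_close \<beta>_close]
    by fastforce
  moreover have "residual Ah bh M w \<le> min_resid Ah bh M C + t"
    using w unfolding expanded_set_def by simp
  moreover have "min_resid Ah bh M C \<le> residual Ah bh M v"
    using v min_resid_le unfolding feasible_set_def by blast
  ultimately show ?thesis using residual_feasible_le_slack[OF v] slack by linarith
qed

lemma theta_hat_min_error:
  assumes feasible: "feasible_set A \<beta> M C \<noteq> {}" and L: "0 \<le> L"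
    and hoffman: "\<And>w. w \<in> box M C \<Longrightarrow>
      \<exists>v\<in>feasible_set A \<beta> M C. objective A M v \<le> objective A M w + L * residual A \<beta> M w"
  shows "\<bar>theta_hat_min Ah bh M C t - theta_min A \<beta> M C\<bar>
      \<le> (real CARD('f) * real M * (C + 1) / C + 3 * L) * t"
proof -
  have "\<bar>theta_hat_min Ah bh M C t - theta_min A \<beta> M C\<bar>
      \<le> real CARD('f) * real M * (C + 1) / C * t + L * (3 * t)"
    unfolding theta_hat_min_def theta_min_def
  proof (rule INF_perturbation_le[OF feasible feasible_subset_expanded_set])
    show "bdd_below (objective A M ` expanded_set Ah bh M C t)"
      by (rule bdd_objective_box(1)[OF expanded_set_subset_box])
    show "\<bar>objective Ah M w - objective A M w\<bar> \<le> real CARD('f) * real M * (C + 1) / C * t"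
      if "w \<in> expanded_set Ah bh M C t" for w
      using objective_perturbation_le_slack expanded_set_subset_box that
      by blast
    show "\<exists>v\<in>feasible_set A \<beta> M C. objective A M v \<le> objective A M w + L * (3 * t)"
      if w: "w \<in> expanded_set Ah bh M C t" for w
    proof -
      obtain v where "v \<in> feasible_set A \<beta> M C"
        "objective A M v \<le> objective A M w + L * residual A \<beta> M w"
        using hoffman expanded_set_subset_box w by blast
      moreover have "L * residual A \<beta> M w \<le> L * (3 * t)"
        using residual_expanded_set_le[OF feasible w] L by (rule mult_left_mono)
      ultimately show ?thesis by force
    qed
    show "0 \<le> L * (3 * t)" using L slack_nonneg(2) by simp
  qed
  then show ?thesis by (simp add: algebra_simps)
qed

lemma theta_hat_max_error:
  assumes feasible: "feasible_set A \<beta> M C \<noteq> {}" and L: "0 \<le> L"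
    and hoffman: "\<And>w. w \<in> box M C \<Longrightarrow>
      \<exists>v\<in>feasible_set A \<beta> M C. objective A M w \<le> objective A M v + L * residual A \<beta> M w"
  shows "\<bar>theta_hat_max Ah bh M C t - theta_max A \<beta> M C\<bar>
      \<le> (real CARD('f) * real M * (C + 1) / C + 3 * L) * t"
proof -
  have "\<bar>theta_hat_max Ah bh M C t - theta_max A \<beta> M C\<bar>
      \<le> real CARD('f) * real M * (C + 1) / C * t + L * (3 * t)"
    unfolding theta_hat_max_def theta_max_def
  proof (rule SUP_perturbation_le[OF feasible feasible_subset_expanded_set])
    show "bdd_above (objective A M ` expanded_set Ah bh M C t)"
      by (rule bdd_objective_box(2)[OF expanded_set_subset_box])
    show "\<bar>objective Ah M w - objective A M w\<bar> \<le> real CARD('f) * real M * (C + 1) / C * t"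
      if "w \<in> expanded_set Ah bh M C t" for w
      using objective_perturbation_le_slack expanded_set_subset_box that
      by blast
    show "\<exists>v\<in>feasible_set A \<beta> M C. objective A M w \<le> objective A M v + L * (3 * t)"
      if w: "w \<in> expanded_set Ah bh M C t" for w
    proof -
      obtain v where "v \<in> feasible_set A \<beta> M C"
        "objective A M w \<le> objective A M v + L * residual A \<beta> M w"
        using hoffman expanded_set_subset_box w by blast
      moreover have "L * residual A \<beta> M w \<le> L * (3 * t)"
        using residual_expanded_set_le[OF feasible w] L by (rule mult_left_mono)
      ultimately show ?thesis by force
    qed
    show "0 \<le> L * (3 * t)" using L slack_nonneg(2) by simp
  qed
  then show ?thesis by (simp add: algebra_simps)
qed

end

lemma theta_hat_error_bound:
  fixes A :: "'f::finite \<Rightarrow> nat \<Rightarrow> real"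
  assumes C: "0 < C" and feasible: "feasible_set A \<beta> M C \<noteq> {}"
  obtains K where "\<And>Ah bh a b t. (\<And>f y. y \<in> {1..M} \<Longrightarrow> \<bar>Ah f y - A f y\<bar> \<le> a) \<Longrightarrow>
      (\<And>f. \<bar>bh f - \<beta> f\<bar> \<le> b) \<Longrightarrow> real M * C * a + b \<le> t \<Longrightarrow>
      \<bar>theta_hat_min Ah bh M C t - theta_min A \<beta> M C\<bar> \<le> K * t \<and>
      \<bar>theta_hat_max Ah bh M C t - theta_max A \<beta> M C\<bar> \<le> K * t"
proof -
  obtain L where "0 \<le> L"
    and "\<And>w. w \<in> box M C \<Longrightarrow>
           \<exists>v\<in>feasible_set A \<beta> M C. objective A M v \<le> objective A M w + L * residual A \<beta> M w"
    and "\<And>w. w \<in> box M C \<Longrightarrow>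
           \<exists>v\<in>feasible_set A \<beta> M C. objective A M w \<le> objective A M v + L * residual A \<beta> M w"
    using objective_hoffman_bound[OF C feasible] by blast
  then show thesis
    using theta_hat_min_error[OF C _ _ _ feasible] theta_hat_max_error[OF C _ _ _ feasible]
    by (intro that) blast
qed

subsection \<open>Stochastic boundedness\<close>

lemma bigOp_of_deterministic_bound:
  fixes X Y Z :: "nat \<Rightarrow> 'a \<Rightarrow> real"
  assumes X: "bigOp P X r" and Y: "bigOp P Y r" and r: "\<And>n. 0 \<le> r n"
    and \<kappa>: "filterlim \<kappa> at_top sequentially" and t: "\<And>n. \<kappa> n * r n \<le> t n" and c: "0 \<le> c"
    and bound: "\<And>n \<omega>. c * X n \<omega> + Y n \<omega> \<le> t n \<Longrightarrow> \<bar>Z n \<omega>\<bar> \<le> K * t n"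
  shows "bigOp P Z t"
  unfolding bigOp_def
proof (intro allI impI)
  fix \<epsilon> :: real assume "0 < \<epsilon>"
  then have "0 < \<epsilon> / 2" by simp
  then obtain Kx Nx Ky Ny where
    X': "\<And>n. Nx \<le> n \<Longrightarrow> \<exists>B\<in>sets P. {\<omega>\<in>space P. \<bar>X n \<omega>\<bar> > Kx * r n} \<subseteq> B \<and> measure P B < \<epsilon> / 2" and
    Y': "\<And>n. Ny \<le> n \<Longrightarrow> \<exists>B\<in>sets P. {\<omega>\<in>space P. \<bar>Y n \<omega>\<bar> > Ky * r n} \<subseteq> B \<and> measure P B < \<epsilon> / 2"
    using X Y unfolding bigOp_def by meson
  obtain N\<kappa> where N\<kappa>: "\<And>n. N\<kappa> \<le> n \<Longrightarrow> c * \<bar>Kx\<bar> + \<bar>Ky\<bar> \<le> \<kappa> n"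
    using \<kappa> unfolding filterlim_at_top eventually_sequentially by blast
  have "\<exists>B\<in>sets P. {\<omega>\<in>space P. \<bar>Z n \<omega>\<bar> > K * t n} \<subseteq> B \<and> measure P B < \<epsilon>"
    if n: "max (max Nx Ny) N\<kappa> \<le> n" for n
  proof -
    obtain Bx where Bx: "Bx \<in> sets P" "{\<omega>\<in>space P. \<bar>X n \<omega>\<bar> > Kx * r n} \<subseteq> Bx" "measure P Bx < \<epsilon> / 2"
      using X' n by auto
    obtain By where By: "By \<in> sets P" "{\<omega>\<in>space P. \<bar>Y n \<omega>\<bar> > Ky * r n} \<subseteq> By" "measure P By < \<epsilon> / 2"
      using Y' n by auto
    have "{\<omega>\<in>space P. \<bar>Z n \<omega>\<bar> > K * t n} \<subseteq> Bx \<union> By"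
    proof (rule subsetI, rule ccontr)
      fix \<omega> assume \<omega>: "\<omega> \<in> {\<omega>\<in>space P. \<bar>Z n \<omega>\<bar> > K * t n}" and "\<omega> \<notin> Bx \<union> By"
      then have "\<bar>X n \<omega>\<bar> \<le> Kx * r n" "\<bar>Y n \<omega>\<bar> \<le> Ky * r n" using Bx By by auto
      then have "X n \<omega> \<le> \<bar>Kx\<bar> * r n" "Y n \<omega> \<le> \<bar>Ky\<bar> * r n"
        using mult_right_mono[OF abs_ge_self r] abs_ge_self[of "X n \<omega>"] abs_ge_self[of "Y n \<omega>"]
        by (meson order_trans)+
      then have "c * X n \<omega> + Y n \<omega> \<le> (c * \<bar>Kx\<bar> + \<bar>Ky\<bar>) * r n"
        using mult_left_mono[OF _ c] by (fastforce simp: algebra_simps)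
      also have "\<dots> \<le> \<kappa> n * r n" using N\<kappa> n r by (intro mult_right_mono) auto
      also have "\<dots> \<le> t n" by (rule t)
      finally show False using bound \<omega> by fastforce
    qed
    moreover have "measure P (Bx \<union> By) < \<epsilon>"
      using measure_Un_le[OF Bx(1) By(1)] Bx(3) By(3) by linarith
    ultimately show ?thesis using Bx(1) By(1) by blast
  qed
  then show "\<exists>K N. \<forall>n\<ge>N. \<exists>B\<in>sets P. {\<omega>\<in>space P. \<bar>Z n \<omega>\<bar> > K * t n} \<subseteq> B \<and> measure P B < \<epsilon>"
    by blast
qed

lemma abs_le_Max_entries:
  fixes B :: "'f::finite \<Rightarrow> nat \<Rightarrow> real"
  assumes "y \<in> {1..M}"
  shows "\<bar>B f y\<bar> \<le> Max {\<bar>B f y\<bar> | f y. y \<in> {1..M}}"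
proof (rule Max_ge)
  have "{\<bar>B f y\<bar> | f y. y \<in> {1..M}} = (\<lambda>(f, y). \<bar>B f y\<bar>) ` (UNIV \<times> {1..M})"
    by fastforce
  then show "finite {\<bar>B f y\<bar> | f y. y \<in> {1..M}}" by simp
  show "\<bar>B f y\<bar> \<in> {\<bar>B f y\<bar> | f y. y \<in> {1..M}}" using assms by blast
qed

text \<open>In particular
  no measurability is needed, since bigOp is defined through outer probability.\<close>

theorem theorem2:
  fixes P :: "'a measure"
    and M :: nat and C :: real
    and A :: "'f::finite \<Rightarrow> nat \<Rightarrow> real" and \<beta> :: "'f \<Rightarrow> real"
    and Ahat :: "nat \<Rightarrow> 'a \<Rightarrow> 'f \<Rightarrow> nat \<Rightarrow> real"
    and \<beta>hat :: "nat \<Rightarrow> 'a \<Rightarrow> 'f \<Rightarrow> real"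
    and \<kappa> :: "nat \<Rightarrow> real"
  assumes "prob_space P"
    and "M \<ge> 1" and "C > 0"
    and "\<And>f y. y \<in> {1..M} \<Longrightarrow> 0 \<le> A f y \<and> A f y \<le> 1"
    and "\<And>f. 0 \<le> \<beta> f \<and> \<beta> f \<le> 1"
    and "feasible_set A \<beta> M C \<noteq> {}"
    and "\<And>n f y. (\<lambda>\<omega>. Ahat n \<omega> f y) \<in> borel_measurable P"
    and "\<And>n f. (\<lambda>\<omega>. \<beta>hat n \<omega> f) \<in> borel_measurable P"
    and "bigOp P (\<lambda>n \<omega>. Max {\<bar>Ahat n \<omega> f y - A f y\<bar> | f y. y \<in> {1..M}})
                 (\<lambda>n. 1 / sqrt (real n))"
    and "bigOp P (\<lambda>n \<omega>. Max (range (\<lambda>f. \<bar>\<beta>hat n \<omega> f - \<beta> f\<bar>)))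
                 (\<lambda>n. 1 / sqrt (real n))"
    and "\<And>n. \<kappa> n > 0"
    and "filterlim \<kappa> at_top sequentially"
    and "(\<lambda>n. \<kappa> n / sqrt (real n)) \<longlonglongrightarrow> 0"
  shows "bigOp P (\<lambda>n \<omega>. theta_hat_min (Ahat n \<omega>) (\<beta>hat n \<omega>) M C (\<kappa> n / sqrt (real n))
                        - theta_min A \<beta> M C) (\<lambda>n. \<kappa> n / sqrt (real n))
       \<and> bigOp P (\<lambda>n \<omega>. theta_hat_max (Ahat n \<omega>) (\<beta>hat n \<omega>) M C (\<kappa> n / sqrt (real n))
                        - theta_max A \<beta> M C) (\<lambda>n. \<kappa> n / sqrt (real n))"
proof -
  obtain K where K: "\<And>Ah bh a b t. (\<And>f y. y \<in> {1..M} \<Longrightarrow> \<bar>Ah f y - A f y\<bar> \<le> a) \<Longrightarrow>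
      (\<And>f. \<bar>bh f - \<beta> f\<bar> \<le> b) \<Longrightarrow> real M * C * a + b \<le> t \<Longrightarrow>
      \<bar>theta_hat_min Ah bh M C t - theta_min A \<beta> M C\<bar> \<le> K * t \<and>
      \<bar>theta_hat_max Ah bh M C t - theta_max A \<beta> M C\<bar> \<le> K * t"
    using theta_hat_error_bound[OF assms(3,6)] by blast
  have error_bound: "\<bar>theta_hat_min (Ahat n \<omega>) (\<beta>hat n \<omega>) M C t - theta_min A \<beta> M C\<bar> \<le> K * t \<and>
      \<bar>theta_hat_max (Ahat n \<omega>) (\<beta>hat n \<omega>) M C t - theta_max A \<beta> M C\<bar> \<le> K * t"
    if "real M * C * Max {\<bar>Ahat n \<omega> f y - A f y\<bar> | f y. y \<in> {1..M}}
        + Max (range (\<lambda>f. \<bar>\<beta>hat n \<omega> f - \<beta> f\<bar>)) \<le> t" for n \<omega> t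
  proof (rule K[OF _ _ that])
    show "\<bar>Ahat n \<omega> f y - A f y\<bar> \<le> Max {\<bar>Ahat n \<omega> f y - A f y\<bar> | f y. y \<in> {1..M}}"
      if "y \<in> {1..M}" for f y
      using that by (rule abs_le_Max_entries)
    show "\<bar>\<beta>hat n \<omega> f - \<beta> f\<bar> \<le> Max (range (\<lambda>f. \<bar>\<beta>hat n \<omega> f - \<beta> f\<bar>))" for f
      using norm_inf_ge[of "\<lambda>f. \<beta>hat n \<omega> f - \<beta> f"] unfolding norm_inf_def .
  qed
  have "0 \<le> real M * C" using assms(3) by simp
  note transfer = bigOp_of_deterministic_bound[where K = K, OF assms(9,10) _ assms(12) _ this]
  show ?thesis
    by (intro conjI transfer[OF _ _ error_bound[THEN conjunct1]]
        transfer[OF _ _ error_bound[THEN conjunct2]]) auto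
qed

end
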